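(* Let $\mathcal{C}\subseteq\mathbb{F}^n$ be an $\mathbb{F}$-linear code of dimension $k$ and let $M_{\mathcal{C}}=(\mathbf{K}^{\mathbf{n}},\rho_{\mathcal{C}})$ be the associated sum-matroid. Then for $i=1,\dots,k$, $d^S_i(M_{\mathcal{C}})=d_{SR,i}(\mathcal{C})$.
   Context: Setting: $\ell,n_1,\dots,n_\ell$ positive integers, $K_1,\dots,K_\ell$ finite fields with a common finite extension $\mathbb{F}$, $m_i=[\mathbb{F}:K_i]$, $n=\sum n_i$. $\mathcal{P}(\mathbf{K}^{\mathbf{n}})=\mathcal{P}(K_1^{n_1})\times\cdots\times\mathcal{P}(K_\ell^{n_\ell})$, $\mathcal{P}(K_i^{n_i})$ the lattice of $K_i$-subspaces of $K_i^{n_i}$, with componentwise inclusion; $\mathrm{Rk}(\mathcal{L})=\sum_i\dim_{K_i}\mathcal{L}_i$; $\mathbf{K}^{\mathbf{n}}=(K_1^{n_1},\dots,K_\ell^{n_\ell})$. For $\mathbf{c}=(\mathbf{c}^{(1)},\dots,\mathbf{c}^{(\ell)})\in\mathbb{F}^n$, $\mathbf{c}^{(i)}\in\mathbb{F}^{n_i}$, let $\Gamma_i(\mathbf{c}^{(i)})$ be the $m_i\times n_i$ matrix over $K_i$ whose columns are the coordinate vectors of the entries of $\mathbf{c}^{(i)}$ w.r.t. a fixed basis of $\mathbb{F}/K_i$; $\mathrm{supp}(\mathbf{c})=(E_1,\dots,E_\ell)$ with $E_i$ the $K_i$-row space of $\Gamma_i(\mathbf{c}^{(i)})$. For $\mathcal{L}\in\mathcal{P}(\mathbf{K}^{\mathbf{n}})$,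 $\mathcal{V}_{\mathcal{L}}=\{\mathbf{c}\in\mathbb{F}^n:\mathrm{supp}(\mathbf{c})\subseteq\mathcal{L}\}$ (an $\mathbb{F}$-subspace). The $i$-th generalized sum-rank weight is $d_{SR,i}(\mathcal{C})=\min\{\mathrm{Rk}(\mathcal{L}):\mathcal{L}\in\mathcal{P}(\mathbf{K}^{\mathbf{n}}),\ \dim_{\mathbb{F}}(\mathcal{C}\cap\mathcal{V}_{\mathcal{L}})\ge i\}$. $\mathcal{C}^\perp$ is the dual of $\mathcal{C}$ in $\mathbb{F}^n$. For $\mathcal{L}=(\mathcal{L}_1,\dots,\mathcal{L}_\ell)$ with $N_i=\dim_{K_i}\mathcal{L}_i$, $N=\sum N_i$, let $\mathbf{A}_i$ be an $N_i\times n_i$ generator matrix of $\mathcal{L}_i$ over $K_i$, $\mathbf{A}=\mathrm{diag}(\mathbf{A}_1,\dots,\mathbf{A}_\ell)$, $\Pi_{\mathcal{L}}(\mathbf{x})=\mathbf{x}\mathbf{A}^T\in\mathbb{F}^N$, and $\rho_{\mathcal{C}}(\mathcal{L})=\dim_{\mathbb{F}}\Pi_{\mathcal{L}}(\mathcal{C}^\perp)$. For a sum-matroid $M$ with rank function $\rho$, its nullity is $\eta(\mathcal{L})=\mathrm{Rk}(\mathcal{L})-\rho(\mathcal{L})$ and its $i$-th generalized weight is $d^S_i(M)=\min\{\mathrm{Rk}(\mathcal{L}):\mathcal{L}\in\mathcal{P}(\mathbf{K}^{\mathbf{n}}),\ \eta(\mathcal{L})=i\}$ for $i=1,\dots,\eta(\mathbf{K}^{\mathbf{n}})$.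 *)

theory Defs
  imports Main
begin

text \<open>The big field \<open>\<bbbF>\<close> is a finite field type; the fields \<open>K\<^sub>i\<close> are subfields of it.\<close>

definition subfield :: "'a::field set \<Rightarrow> bool" where
  "subfield K \<longleftrightarrow> 0 \<in> K \<and> 1 \<in> K \<and> (\<forall>x\<in>K. \<forall>y\<in>K. x + y \<in> K \<and> x * y \<in> K)
     \<and> (\<forall>x\<in>K. - x \<in> K \<and> inverse x \<in> K)"

definition kspan :: "'a::field set \<Rightarrow> ('b \<Rightarrow> 'a) set \<Rightarrow> ('b \<Rightarrow> 'a) set" where
  "kspan K S = {v. \<exists>T a. finite T \<and> T \<subseteq> S \<and> (\<forall>u\<in>T. a u \<in> K) \<and>
                        v = (\<lambda>x. \<Sum>u\<in>T. a u * u x)}"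

definition ksubspace :: "'a::field set \<Rightarrow> ('b \<Rightarrow> 'a) set \<Rightarrow> bool" where
  "ksubspace K V \<longleftrightarrow> (\<lambda>_. 0) \<in> V \<and> (\<forall>u\<in>V. \<forall>v\<in>V. (\<lambda>x. u x + v x) \<in> V)
     \<and> (\<forall>a\<in>K. \<forall>v\<in>V. (\<lambda>x. a * v x) \<in> V)"

definition kdim :: "'a::field set \<Rightarrow> ('b \<Rightarrow> 'a) set \<Rightarrow> nat" where
  "kdim K V = (LEAST d. \<exists>B. finite B \<and> card B = d \<and> B \<subseteq> V \<and> kspan K B = V)"

text \<open>K^m, as functions nat => 'a vanishing from index m on.\<close>
definition kvecs :: "'a::field set \<Rightarrow> nat \<Rightarrow> (nat \<Rightarrow> 'a) set" where
  "kvecs K m = {v. (\<forall>j. v j \<in> K) \<and> (\<forall>j\<ge>m. v j = 0)}"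

text \<open>\<open>\<bbbF>\<^sup>n\<close> with n = n_0 + ... + n_(l-1), in block form: c (i,j) is the j-th entry of block i.\<close>
definition Fvecs :: "nat \<Rightarrow> (nat \<Rightarrow> nat) \<Rightarrow> (nat \<times> nat \<Rightarrow> 'a::field) set" where
  "Fvecs l n = {c. \<forall>i j. \<not> (i < l \<and> j < n i) \<longrightarrow> c (i, j) = 0}"

definition field_basis :: "'a::field set \<Rightarrow> 'a list \<Rightarrow> bool" where
  "field_basis K bs \<longleftrightarrow> (\<forall>x. \<exists>!a. (\<forall>t<length bs. a t \<in> K) \<and> (\<forall>t\<ge>length bs. a t = 0)
      \<and> x = (\<Sum>t<length bs. a t * bs ! t))"

definition coords :: "'a::field set \<Rightarrow> 'a list \<Rightarrow> 'a \<Rightarrow> nat \<Rightarrow> 'a" where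
  "coords K bs x = (THE a. (\<forall>t<length bs. a t \<in> K) \<and> (\<forall>t\<ge>length bs. a t = 0)
      \<and> x = (\<Sum>t<length bs. a t * bs ! t))"

text \<open>Row space over K of the matrix \<Gamma>(v) (rows indexed by basis elements t, columns by j < m).\<close>
definition rowspace_Gamma :: "'a::field set \<Rightarrow> 'a list \<Rightarrow> nat \<Rightarrow> (nat \<Rightarrow> 'a) \<Rightarrow> (nat \<Rightarrow> 'a) set" where
  "rowspace_Gamma K bs m v =
     kspan K {(\<lambda>j. if j < m then coords K bs (v j) t else 0) | t. t < length bs}"

text \<open>The product lattice of subspaces (components beyond l are fixed to zero).\<close>
definition Plat :: "nat \<Rightarrow> (nat \<Rightarrow> nat) \<Rightarrow> (nat \<Rightarrow> 'a::field set) \<Rightarrow> (nat \<Rightarrow> (nat \<Rightarrow> 'a) set) set" where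
  "Plat l n K = {L. (\<forall>i<l. ksubspace (K i) (L i) \<and> L i \<subseteq> kvecs (K i) (n i))
                    \<and> (\<forall>i\<ge>l. L i = {\<lambda>_. 0})}"

definition Rk :: "nat \<Rightarrow> (nat \<Rightarrow> 'a::field set) \<Rightarrow> (nat \<Rightarrow> (nat \<Rightarrow> 'a) set) \<Rightarrow> nat" where
  "Rk l K L = (\<Sum>i<l. kdim (K i) (L i))"

text \<open>V_L = codewords whose support is contained in L (componentwise).\<close>
definition VL :: "nat \<Rightarrow> (nat \<Rightarrow> nat) \<Rightarrow> (nat \<Rightarrow> 'a::field set) \<Rightarrow> (nat \<Rightarrow> 'a list)
                   \<Rightarrow> (nat \<Rightarrow> (nat \<Rightarrow> 'a) set) \<Rightarrow> (nat \<times> nat \<Rightarrow> 'a) set" where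
  "VL l n K \<beta> L = {c \<in> Fvecs l n. \<forall>i<l. rowspace_Gamma (K i) (\<beta> i) (n i) (\<lambda>j. c (i, j)) \<subseteq> L i}"

definition dual_code :: "nat \<Rightarrow> (nat \<Rightarrow> nat) \<Rightarrow> (nat \<times> nat \<Rightarrow> 'a::field) set \<Rightarrow> (nat \<times> nat \<Rightarrow> 'a) set" where
  "dual_code l n C = {x \<in> Fvecs l n. \<forall>c\<in>C. (\<Sum>i<l. \<Sum>j<n i. x (i, j) * c (i, j)) = 0}"

definition genmat :: "'a::field set \<Rightarrow> (nat \<Rightarrow> 'a) set \<Rightarrow> nat \<Rightarrow> nat \<Rightarrow> 'a" where
  "genmat K V = (SOME A. (\<forall>r<kdim K V. A r \<in> V) \<and> kspan K (A ` {..<kdim K V}) = V)"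

text \<open>\<Pi>_L(x) = x A^T, A = diag(A_1,...,A_l), result in \<bbbF>^N in block form.\<close>
definition PiL :: "nat \<Rightarrow> (nat \<Rightarrow> nat) \<Rightarrow> (nat \<Rightarrow> 'a::field set) \<Rightarrow> (nat \<Rightarrow> (nat \<Rightarrow> 'a) set)
                     \<Rightarrow> (nat \<times> nat \<Rightarrow> 'a) \<Rightarrow> (nat \<times> nat \<Rightarrow> 'a)" where
  "PiL l n K L x = (\<lambda>(i, r). if i < l \<and> r < kdim (K i) (L i)
       then (\<Sum>j<n i. x (i, j) * genmat (K i) (L i) r j) else 0)"

definition rhoC :: "nat \<Rightarrow> (nat \<Rightarrow> nat) \<Rightarrow> (nat \<Rightarrow> 'a::field set) \<Rightarrow> (nat \<times> nat \<Rightarrow> 'a) set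
                     \<Rightarrow> (nat \<Rightarrow> (nat \<Rightarrow> 'a) set) \<Rightarrow> nat" where
  "rhoC l n K C L = kdim (UNIV :: 'a set) (PiL l n K L ` dual_code l n C)"

definition nullityC :: "nat \<Rightarrow> (nat \<Rightarrow> nat) \<Rightarrow> (nat \<Rightarrow> 'a::field set) \<Rightarrow> (nat \<times> nat \<Rightarrow> 'a) set
                     \<Rightarrow> (nat \<Rightarrow> (nat \<Rightarrow> 'a) set) \<Rightarrow> nat" where
  "nullityC l n K C L = Rk l K L - rhoC l n K C L"

definition dS :: "nat \<Rightarrow> (nat \<Rightarrow> nat) \<Rightarrow> (nat \<Rightarrow> 'a::field set) \<Rightarrow> (nat \<times> nat \<Rightarrow> 'a) set \<Rightarrow> nat \<Rightarrow> nat" where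
  "dS l n K C i = Min {Rk l K L | L. L \<in> Plat l n K \<and> nullityC l n K C L = i}"

definition dSR :: "nat \<Rightarrow> (nat \<Rightarrow> nat) \<Rightarrow> (nat \<Rightarrow> 'a::field set) \<Rightarrow> (nat \<Rightarrow> 'a list)
                    \<Rightarrow> (nat \<times> nat \<Rightarrow> 'a) set \<Rightarrow> nat \<Rightarrow> nat" where
  "dSR l n K \<beta> C i = Min {Rk l K L | L. L \<in> Plat l n K \<and>
                                 kdim (UNIV :: 'a set) (C \<inter> VL l n K \<beta> L) \<ge> i}"

end

(* The nullity of the sum-matroid M_C at L is dim (C \<inter> V_L). Indeed, let A be the
   block-diagonal generator matrix of L. The map y \<mapsto> y A is adjoint to Pi_L(x) = x A^T
   and maps F^N bijectively onto V_L, so the orthogonal complement of Pi_L(C^perp) in F^N,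
   whose dimension is N - rho_C(L), is the preimage of C^perp^perp = C under y \<mapsto> y A
   and hence isomorphic to C \<inter> V_L. Thus d^S_i minimises Rk over the L with
   dim (C \<inter> V_L) = i, and d_SR,i over the L with dim (C \<inter> V_L) \<ge> i. These minima
   agree: removing one basis vector from one component of L lowers Rk(L) by one and
   dim (C \<inter> V_L) by at most one, so a minimiser of the second problem already has
   dim (C \<inter> V_L) = i. *)

theory Submission
  imports Defs "HOL-Library.Function_Algebras" "HOL.Vector_Spaces"
begin

section \<open>Vector spaces over a finite field\<close>

text \<open>The function spaces used below, indexed by \<open>nat \<times> nat\<close>, are not finite-dimensional, so
  the locale \<open>finite_dimensional_vector_space\<close> does not apply. Over a finite field the
  dimensions of finite subspaces are compared by counting instead, via \<open>card S = q ^ dim S\<close>.\<close>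

lemma card_field_ge_2:
  assumes "finite (UNIV :: 'a::field set)"
  shows "2 \<le> card (UNIV :: 'a set)"
proof -
  have "card {0::'a, 1} \<le> card (UNIV :: 'a set)" using assms by (rule card_mono) auto
  then show ?thesis by simp
qed

context vector_space
begin

lemma card_span_independent:
  assumes "finite B" "independent B"
  shows "card (span B) = card (UNIV :: 'a set) ^ card B"
  using assms
proof (induction B rule: finite_induct)
  case empty
  then show ?case by simp
next
  case (insert b B)
  have indep: "independent B" and b: "b \<notin> span B"
    using insert.prems insert.hyps(2) by (simp_all add: independent_insert)
  let ?g = "\<lambda>(c, v). c *s b + v"
  have "span (insert b B) = ?g ` (UNIV \<times> span B)"
  proof (intro equalityI subsetI)
    fix x assume "x \<in> span (insert b B)"
    then obtain c where "x - c *s b \<in> span B" by (auto simp: span_insert)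
    then show "x \<in> ?g ` (UNIV \<times> span B)" by (intro image_eqI[of _ _ "(c, x - c *s b)"]) auto
  next
    fix x assume "x \<in> ?g ` (UNIV \<times> span B)"
    then obtain c v where "v \<in> span B" "x = c *s b + v" by auto
    then show "x \<in> span (insert b B)" unfolding span_insert by (intro CollectI exI[of _ c]) simp
  qed
  moreover have "inj_on ?g (UNIV \<times> span B)"
  proof (rule inj_onI, clarify)
    fix c v c' v'
    assume v: "v \<in> span B" "v' \<in> span B" and eq: "c *s b + v = c' *s b + v'"
    have "(c - c') *s b = v' - v"
      using eq by (simp add: scale_left_diff_distrib algebra_simps)
    then have in_span: "(c - c') *s b \<in> span B"
      using span_diff[OF v(2) v(1)] by simp
    have "c = c'"
    proof (rule ccontr)
      assume "c \<noteq> c'"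
      then have "b = inverse (c - c') *s ((c - c') *s b)" by simp
      also have "\<dots> \<in> span B" using in_span by (rule span_scale)
      finally show False using b by contradiction
    qed
    with eq show "c = c' \<and> v = v'" by simp
  qed
  ultimately show ?case
    using insert indep by (simp add: card_image card_cartesian_product)
qed

lemma card_subspace:
  assumes "subspace S" "finite S"
  shows "card S = card (UNIV :: 'a set) ^ dim S"
proof -
  obtain B where B: "B \<subseteq> S" "independent B" "S \<subseteq> span B" "card B = dim S"
    by (rule basis_exists)
  then have "span B = S" using span_subspace assms(1) by blast
  with B assms(2) card_span_independent[of B] show ?thesis
    by (metis finite_subset)
qed

lemma dim_le_if_subset:
  assumes "finite (UNIV :: 'a set)" "subspace T" "finite T" "S \<subseteq> T"
  shows "dim S \<le> dim T"
proof -
  have "span S \<subseteq> T" using span_minimal assms(2,4) by blast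
  then have "card (UNIV :: 'a set) ^ dim (span S) \<le> card (UNIV :: 'a set) ^ dim T"
    using card_mono[OF assms(3)] card_subspace[OF subspace_span] card_subspace[OF assms(2,3)]
      finite_subset[OF _ assms(3)] by metis
  moreover have "1 < card (UNIV :: 'a set)"
    using card_field_ge_2[OF assms(1)] by simp
  ultimately show ?thesis by simp
qed

lemma subspace_eq_if_dim_eq:
  assumes "subspace S" "subspace T" "finite T" "S \<subseteq> T" "dim S = dim T"
  shows "S = T"
proof -
  have "finite S" using assms(3,4) finite_subset by blast
  then have "card S = card T"
    using card_subspace[OF assms(1)] card_subspace[OF assms(2,3)] assms(5) by simp
  then show ?thesis using assms(3,4) card_subset_eq by blast
qed

lemma dim_subset_span_insert_le:
  assumes "finite Y" "X \<subseteq> span (insert x Y)"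
  shows "dim X \<le> dim Y + 1"
proof -
  obtain B where B: "B \<subseteq> Y" "independent B" "Y \<subseteq> span B" "card B = dim Y"
    by (rule basis_exists)
  have "insert x Y \<subseteq> span (insert x B)"
    using B(3) span_mono[of B "insert x B"] span_base[of x "insert x B"] by auto
  then have "X \<subseteq> span (insert x B)"
    using assms(2) span_minimal[OF _ subspace_span] by blast
  moreover have "finite B" using B(1) assms(1) finite_subset by blast
  ultimately have "dim X \<le> card (insert x B)" by (intro dim_le_card) auto
  also have "\<dots> \<le> dim Y + 1" using \<open>finite B\<close> B(4) by (simp add: card_insert_if)
  finally show ?thesis .
qed

lemma span_eq_zero_if_dim_eq_0:
  assumes "finite S" "dim S = 0"
  shows "span S = {0}"
proof -
  obtain B where B: "B \<subseteq> S" "S \<subseteq> span B" "card B = dim S"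
    by (rule basis_exists)
  then have "B = {}" using finite_subset[OF B(1) assms(1)] assms(2) by simp
  then have "S \<subseteq> {0}" using B(2) by simp
  then show ?thesis using span_mono[of S "{0}"] span_zero[of S] by auto
qed

lemma sum_scale_eq_0_independent_image:
  assumes "independent (A ` S)" "inj_on A S" "finite S" "(\<Sum>r\<in>S. c r *s A r) = 0" "r \<in> S"
  shows "c r = 0"
proof -
  have "(\<Sum>v\<in>A ` S. c (the_inv_into S A v) *s v) = 0"
    using assms(4) by (simp add: sum.reindex[OF assms(2)] the_inv_into_f_f[OF assms(2)])
  from independentD[OF assms(1) finite_imageI[OF assms(3)] order_refl this, of "A r"]
  have "c (the_inv_into S A (A r)) = 0" using assms(5) by blast
  then show ?thesis using the_inv_into_f_f[OF assms(2,5)] by simp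
qed

lemma in_span_image_iff:
  assumes "inj_on A S" "finite S"
  shows "x \<in> span (A ` S) \<longleftrightarrow> (\<exists>u. x = (\<Sum>r\<in>S. u r *s A r))"
proof
  assume "x \<in> span (A ` S)"
  then obtain u where "x = (\<Sum>v\<in>A ` S. u v *s v)"
    using span_finite[OF finite_imageI[OF assms(2)]] by auto
  then show "\<exists>u. x = (\<Sum>r\<in>S. u r *s A r)" by (auto simp: sum.reindex[OF assms(1)])
qed (auto intro: span_sum span_scale span_base)

end

context vector_space_pair
begin

lemma dim_kernel_plus_dim_image:
  assumes "finite (UNIV :: 'a set)" "Vector_Spaces.linear s1 s2 f" "vs1.subspace S" "finite S"
  shows "vs1.dim {x \<in> S. f x = 0} + vs2.dim (f ` S) = vs1.dim S"
proof -
  let ?Z = "{x \<in> S. f x = 0}"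
  have fibre: "card {x \<in> S. f x = y} = card ?Z" if "y \<in> f ` S" for y
  proof -
    obtain x0 where x0: "x0 \<in> S" "y = f x0" using \<open>y \<in> f ` S\<close> by auto
    have "{x \<in> S. f x = y} = (\<lambda>z. z + x0) ` ?Z"
    proof (intro equalityI subsetI)
      fix x assume "x \<in> {x \<in> S. f x = y}"
      then have "x - x0 \<in> ?Z"
        using x0 linear_diff[OF assms(2)] vs1.subspace_diff[OF assms(3)] by auto
      then show "x \<in> (\<lambda>z. z + x0) ` ?Z" by (intro image_eqI[of _ _ "x - x0"]) auto
    next
      fix x assume "x \<in> (\<lambda>z. z + x0) ` ?Z"
      then show "x \<in> {x \<in> S. f x = y}"
        using x0 linear_add[OF assms(2)] vs1.subspace_add[OF assms(3)] by auto
    qed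
    moreover have "inj_on (\<lambda>z. z + x0) ?Z" by (rule inj_onI) simp
    ultimately show ?thesis by (simp add: card_image)
  qed
  have "S = (\<Union>y\<in>f ` S. {x \<in> S. f x = y})" by auto
  then have "card S = (\<Sum>y\<in>f ` S. card {x \<in> S. f x = y})"
    using assms(4) by (subst card_UN_disjoint[symmetric]) auto
  also have "\<dots> = card (f ` S) * card ?Z" using fibre by simp
  finally have "card S = card (f ` S) * card ?Z" .
  moreover have "?Z = S \<inter> {x. f x = 0}" by blast
  then have "card ?Z = card (UNIV :: 'a set) ^ vs1.dim ?Z"
    using vs1.subspace_inter[OF assms(3) linear_subspace_kernel[OF assms(2)]] assms(4)
    by (intro vs1.card_subspace) simp_all
  moreover have "card (f ` S) = card (UNIV :: 'a set) ^ vs2.dim (f ` S)"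
    using linear_subspace_image[OF assms(2,3)] assms(4) by (intro vs2.card_subspace) simp_all
  ultimately have
    "card (UNIV :: 'a set) ^ vs1.dim S = card (UNIV :: 'a set) ^ (vs1.dim ?Z + vs2.dim (f ` S))"
    by (simp add: vs1.card_subspace[OF assms(3,4), symmetric] power_add)
  moreover have "1 < card (UNIV :: 'a set)" using card_field_ge_2[OF assms(1)] by simp
  ultimately show ?thesis by simp
qed

lemma dim_image_eq_if_inj_on:
  assumes "finite (UNIV :: 'a set)" "Vector_Spaces.linear s1 s2 f" "vs1.subspace S" "finite S"
    "inj_on f S"
  shows "vs2.dim (f ` S) = vs1.dim S"
proof -
  have "card (f ` S) = card (UNIV :: 'a set) ^ vs2.dim (f ` S)"
    using linear_subspace_image[OF assms(2,3)] assms(4) by (intro vs2.card_subspace) simp_all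
  then have "card (UNIV :: 'a set) ^ vs2.dim (f ` S) = card (UNIV :: 'a set) ^ vs1.dim S"
    by (simp add: vs1.card_subspace[OF assms(3,4), symmetric] card_image[OF assms(5)])
  moreover have "1 < card (UNIV :: 'a set)" using card_field_ge_2[OF assms(1)] by simp
  ultimately show ?thesis by simp
qed

lemma dim_le_dim_preimage_span_plus_1:
  assumes "Vector_Spaces.linear s1 s2 f" "vs1.subspace X" "finite X"
    "f ` X \<subseteq> vs2.span (insert b U)"
  shows "vs1.dim X \<le> vs1.dim {x \<in> X. f x \<in> vs2.span U} + 1"
proof -
  let ?Y = "{x \<in> X. f x \<in> vs2.span U}"
  have "\<exists>x0. X \<subseteq> vs1.span (insert x0 ?Y)"
  proof (cases "X \<subseteq> ?Y")
    case True
    then show ?thesis using vs1.span_superset by blast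
  next
    case False
    then obtain x0 where x0: "x0 \<in> X" "f x0 \<notin> vs2.span U" by blast
    obtain \<mu> where \<mu>: "f x0 - \<mu> *b b \<in> vs2.span U"
      using assms(4) x0(1) vs2.span_breakdown_eq by blast
    have "\<mu> \<noteq> 0" using \<mu> x0(2) by auto
    have "x \<in> vs1.span (insert x0 ?Y)" if x: "x \<in> X" for x
    proof -
      obtain c where c: "f x - c *b b \<in> vs2.span U"
        using assms(4) x vs2.span_breakdown_eq by blast
      let ?z = "x - (c / \<mu>) *a x0"
      have "f ?z = (f x - c *b b) - (c / \<mu>) *b (f x0 - \<mu> *b b)"
        using \<open>\<mu> \<noteq> 0\<close>
        by (simp add: linear_diff[OF assms(1)] linear_scale[OF assms(1)]
            vs2.scale_right_diff_distrib)
      then have "?z \<in> ?Y"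
        using c \<mu> x x0(1) assms(2)
        by (simp add: vs2.span_diff vs2.span_scale vs1.subspace_diff vs1.subspace_scale)
      then have "?z + (c / \<mu>) *a x0 \<in> vs1.span (insert x0 ?Y)"
        by (intro vs1.span_add vs1.span_scale vs1.span_base) auto
      then show ?thesis by simp
    qed
    then show ?thesis by blast
  qed
  then show ?thesis using vs1.dim_subset_span_insert_le[of ?Y X] assms(3) by auto
qed

end

section \<open>Vectors as functions: supports, dot product and orthogonal complements\<close>

definition scale_fun :: "'a::field \<Rightarrow> ('i \<Rightarrow> 'a) \<Rightarrow> 'i \<Rightarrow> 'a" where
  "scale_fun c v = (\<lambda>x. c * v x)"

lemma scale_fun_apply [simp]: "scale_fun c v x = c * v x"
  by (simp add: scale_fun_def)

interpretation fv: vector_space "scale_fun :: 'a::field \<Rightarrow> ('i \<Rightarrow> 'a) \<Rightarrow> 'i \<Rightarrow> 'a"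
  by unfold_locales (simp_all add: fun_eq_iff algebra_simps)

interpretation fv2: vector_space_pair "scale_fun :: 'a::field \<Rightarrow> ('i \<Rightarrow> 'a) \<Rightarrow> 'i \<Rightarrow> 'a"
  "scale_fun :: 'a \<Rightarrow> ('j \<Rightarrow> 'a) \<Rightarrow> 'j \<Rightarrow> 'a" ..

lemma linear_scale_funI:
  fixes f :: "('i \<Rightarrow> 'a::field) \<Rightarrow> 'j \<Rightarrow> 'a"
  assumes "\<And>x y. f (x + y) = f x + f y" "\<And>c x. f (scale_fun c x) = scale_fun c (f x)"
  shows "Vector_Spaces.linear scale_fun scale_fun f"
proof -
  have "vector_space (scale_fun :: 'a \<Rightarrow> ('i \<Rightarrow> 'a) \<Rightarrow> _)"
    "vector_space (scale_fun :: 'a \<Rightarrow> ('j \<Rightarrow> 'a) \<Rightarrow> _)"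
    by (fact fv.vector_space_axioms)+
  then show ?thesis using assms by (simp add: linear_iff)
qed

lemma sum_fun_apply: "(sum f A) x = (\<Sum>a\<in>A. f a x)"
  by (induction A rule: infinite_finite_induct) auto

definition vecs_on :: "'i set \<Rightarrow> ('i \<Rightarrow> 'a::zero) set" where
  "vecs_on I = {x. \<forall>p. p \<notin> I \<longrightarrow> x p = 0}"

lemma finite_vecs_on: "finite I \<Longrightarrow> finite (vecs_on I :: ('i \<Rightarrow> 'a::{zero,finite}) set)"
  using finite_set_of_finite_funs[of I "UNIV :: 'a set" 0] by (simp add: vecs_on_def)

lemma subspace_vecs_on: "fv.subspace (vecs_on I)"
  by (auto simp: fv.subspace_def vecs_on_def)

definition unit_vec :: "'i \<Rightarrow> 'i \<Rightarrow> 'a::zero_neq_one" where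
  "unit_vec p = (\<lambda>q. if q = p then 1 else 0)"

lemma sum_unit_vec_apply:
  assumes "finite I"
  shows "(\<Sum>p\<in>I. scale_fun (x p) (unit_vec p)) q = (if q \<in> I then x q else 0)"
proof -
  have "(\<Sum>p\<in>I. scale_fun (x p) (unit_vec p)) q = (\<Sum>p\<in>I. if q = p then x q else 0)"
    by (auto simp: sum_fun_apply unit_vec_def intro!: sum.cong)
  then show ?thesis using assms by simp
qed

lemma dim_vecs_on:
  assumes "finite I"
  shows "fv.dim (vecs_on I :: ('i \<Rightarrow> 'a::field) set) = card I"
proof -
  let ?B = "unit_vec ` I :: ('i \<Rightarrow> 'a) set"
  have inj: "inj_on unit_vec I"
    by (rule inj_onI) (auto simp: unit_vec_def fun_eq_iff split: if_splits)
  have "vecs_on I \<subseteq> fv.span ?B"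
  proof
    fix x :: "'i \<Rightarrow> 'a" assume "x \<in> vecs_on I"
    then have "x = (\<Sum>p\<in>I. scale_fun (x p) (unit_vec p))"
      using assms by (auto simp: fun_eq_iff sum_unit_vec_apply vecs_on_def)
    also have "\<dots> \<in> fv.span ?B" by (intro fv.span_sum fv.span_scale fv.span_base) auto
    finally show "x \<in> fv.span ?B" .
  qed
  moreover have "fv.independent ?B"
  proof
    assume "fv.dependent ?B"
    then obtain u p where "p \<in> I" "u (unit_vec p) \<noteq> 0" "(\<Sum>v\<in>?B. scale_fun (u v) v) = 0"
      using fv.dependent_finite[of ?B] assms by auto
    moreover have "(\<Sum>v\<in>?B. scale_fun (u v) v) p = u (unit_vec p)"
      using sum_unit_vec_apply[OF assms, of "\<lambda>q. u (unit_vec q)" p] \<open>p \<in> I\<close>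
      by (simp add: sum.reindex[OF inj])
    ultimately show False by simp
  qed
  moreover have "?B \<subseteq> vecs_on I" by (auto simp: vecs_on_def unit_vec_def)
  ultimately show ?thesis
    using fv.basis_card_eq_dim card_image[OF inj] by metis
qed

definition dot :: "'i set \<Rightarrow> ('i \<Rightarrow> 'a::comm_ring_1) \<Rightarrow> ('i \<Rightarrow> 'a) \<Rightarrow> 'a" where
  "dot I x y = (\<Sum>p\<in>I. x p * y p)"

lemma dot_commute: "dot I x y = dot I y x"
  by (simp add: dot_def mult.commute)

lemma dot_add_left: "dot I (x + y) z = dot I x z + dot I y z"
  by (simp add: dot_def algebra_simps sum.distrib)

lemma dot_scale_left: "dot I (scale_fun c x) y = c * dot I x y"
  by (simp add: dot_def sum_distrib_left algebra_simps)

lemma dot_add_right: "dot I z (x + y) = dot I z x + dot I z y"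
  by (simp add: dot_def algebra_simps sum.distrib)

lemma dot_scale_right: "dot I x (scale_fun c y) = c * dot I x y"
  by (simp add: dot_def sum_distrib_left algebra_simps)

lemma dot_zero_left [simp]: "dot I 0 y = 0"
  by (simp add: dot_def)

lemma dot_zero_right [simp]: "dot I x 0 = 0"
  by (simp add: dot_def)

lemma dot_unit_vec:
  assumes "finite I" "p \<in> I"
  shows "dot I (unit_vec p) y = y p"
proof -
  have "dot I (unit_vec p) y = (\<Sum>q\<in>I. if p = q then y q else 0)"
    by (auto simp: dot_def unit_vec_def intro!: sum.cong)
  then show ?thesis using assms by simp
qed

definition orth :: "'i set \<Rightarrow> ('i \<Rightarrow> 'a::field) set \<Rightarrow> ('i \<Rightarrow> 'a) set" where
  "orth I S = {x \<in> vecs_on I. \<forall>w\<in>S. dot I x w = 0}"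

lemma subspace_orth: "fv.subspace (orth I S)"
  using subspace_vecs_on[of I]
  by (auto simp: fv.subspace_def orth_def dot_add_left dot_scale_left)

lemma orth_span: "orth I (fv.span E) = orth I E"
proof
  show "orth I E \<subseteq> orth I (fv.span E)"
  proof
    fix x assume x: "x \<in> orth I E"
    have "fv.subspace {w. dot I x w = 0}"
      by (auto simp: fv.subspace_def dot_add_right dot_scale_right)
    moreover have "E \<subseteq> {w. dot I x w = 0}" using x by (auto simp: orth_def)
    ultimately have "fv.span E \<subseteq> {w. dot I x w = 0}" by (rule fv.span_minimal[rotated])
    then show "x \<in> orth I (fv.span E)" using x by (auto simp: orth_def)
  qed
qed (auto simp: orth_def intro: fv.span_base)

lemma orth_antimono: "S \<subseteq> T \<Longrightarrow> orth I T \<subseteq> orth I S"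
  by (auto simp: orth_def)

lemma orth_subset_vecs_on: "orth I S \<subseteq> vecs_on I"
  by (auto simp: orth_def)

definition dot_map ::
    "'i set \<Rightarrow> ('i \<Rightarrow> 'a::field) set \<Rightarrow> ('i \<Rightarrow> 'a) \<Rightarrow> ('i \<Rightarrow> 'a) \<Rightarrow> 'a" where
  "dot_map I E x = (\<lambda>w. if w \<in> E then dot I x w else 0)"

lemma linear_dot_map: "Vector_Spaces.linear scale_fun scale_fun (dot_map I E)"
  by (rule linear_scale_funI) (auto simp: dot_map_def fun_eq_iff dot_add_left dot_scale_left)

lemma kernel_dot_map: "{x \<in> vecs_on I. dot_map I E x = 0} = orth I E"
  by (auto simp: orth_def dot_map_def fun_eq_iff)

lemma dot_map_in_vecs_on: "dot_map I E x \<in> vecs_on E"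
  by (simp add: dot_map_def vecs_on_def)

lemma dim_orth_plus_dim_image_dot_map:
  fixes E :: "('i \<Rightarrow> 'a::{field,finite}) set"
  assumes "finite I"
  shows "fv.dim (orth I E) + fv.dim (dot_map I E ` vecs_on I) = card I"
proof -
  have "fv.dim {x \<in> vecs_on I. dot_map I E x = 0} + fv.dim (dot_map I E ` vecs_on I)
      = fv.dim (vecs_on I :: ('i \<Rightarrow> 'a) set)"
    by (rule fv2.dim_kernel_plus_dim_image[OF finite_UNIV linear_dot_map subspace_vecs_on
          finite_vecs_on[OF assms]])
  then show ?thesis unfolding kernel_dot_map dim_vecs_on[OF assms] .
qed

lemma dim_image_dot_map_le:
  fixes E :: "('i \<Rightarrow> 'a::{field,finite}) set"
  assumes "finite E"
  shows "fv.dim (dot_map I E ` vecs_on I) \<le> card E"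
proof -
  have "dot_map I E ` vecs_on I \<subseteq> vecs_on E" using dot_map_in_vecs_on by blast
  from fv.dim_le_if_subset[OF finite_UNIV subspace_vecs_on finite_vecs_on[OF assms] this]
  show ?thesis unfolding dim_vecs_on[OF assms] .
qed

lemma card_le_dim_orth_plus_card:
  fixes E :: "('i \<Rightarrow> 'a::{field,finite}) set"
  assumes "finite I" "finite E"
  shows "card I \<le> fv.dim (orth I E) + card E"
  using dim_orth_plus_dim_image_dot_map[OF assms(1), of E] dim_image_dot_map_le[OF assms(2), of I]
  by simp

lemma dim_image_dot_map_independent:
  fixes B :: "('i \<Rightarrow> 'a::{field,finite}) set"
  assumes "finite I" "B \<subseteq> vecs_on I" "finite B" "fv.independent B"
  shows "fv.dim (dot_map I B ` vecs_on I) = card B"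
proof -
  let ?U = "dot_map I B ` vecs_on I"
  obtain D where D: "D \<subseteq> ?U" "?U \<subseteq> fv.span D" "card D = fv.dim ?U"
    by (rule fv.basis_exists)
  have "?U \<subseteq> vecs_on B" using dot_map_in_vecs_on by blast
  then have "finite D"
    using finite_subset[OF subset_trans[OF D(1)] finite_vecs_on[OF assms(3)]] by blast
  txt \<open>A vector \<open>a\<close> orthogonal to the image gives the linear relation \<open>\<Sum>w\<in>B. a w \<cdot> w = 0\<close>,
    since its value at \<open>p \<in> I\<close> is the dot product of \<open>a\<close> with the image of the unit vector at \<open>p\<close>.\<close>
  have orth_zero: "a = 0" if "a \<in> orth B D" for a
  proof -
    have a: "a \<in> orth B ?U"
      using that orth_antimono[OF D(2)] orth_span by blast
    have "(\<Sum>w\<in>B. scale_fun (a w) w) p = 0" for p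
    proof (cases "p \<in> I")
      case True
      have "unit_vec p \<in> vecs_on I" using True by (simp add: vecs_on_def unit_vec_def)
      then have "dot B a (dot_map I B (unit_vec p)) = 0" using a by (auto simp: orth_def)
      moreover have "dot B a (dot_map I B (unit_vec p)) = (\<Sum>w\<in>B. a w * w p)"
        unfolding dot_def[of B] dot_map_def
        by (intro sum.cong refl) (simp add: dot_unit_vec[OF assms(1) True])
      ultimately show ?thesis by (simp add: sum_fun_apply)
    next
      case False
      then have "w p = 0" if "w \<in> B" for w using that assms(2) by (auto simp: vecs_on_def)
      then show ?thesis by (simp add: sum_fun_apply sum.neutral)
    qed
    then have "(\<Sum>w\<in>B. scale_fun (a w) w) = 0" by (simp add: fun_eq_iff)
    then have "a w = 0" if "w \<in> B" for w
      using fv.independentD[OF assms(4,3) order_refl _ that] by blast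
    with that show "a = 0" by (auto simp: orth_def vecs_on_def fun_eq_iff)
  qed
  have "fv.dim (orth B D) = 0"
    using fv.dim_le_card[of "orth B D" "{}"] orth_zero by auto
  then have "card B \<le> fv.dim ?U"
    using card_le_dim_orth_plus_card[OF assms(3) \<open>finite D\<close>] D(3) by simp
  then show ?thesis using dim_image_dot_map_le[OF assms(3)] by (simp add: le_antisym)
qed

lemma dim_orth_plus_dim:
  fixes W :: "('i \<Rightarrow> 'a::{field,finite}) set"
  assumes "finite I" "W \<subseteq> vecs_on I" "fv.subspace W"
  shows "fv.dim (orth I W) + fv.dim W = card I"
proof -
  obtain B where B: "B \<subseteq> W" "fv.independent B" "W \<subseteq> fv.span B" "card B = fv.dim W"
    by (rule fv.basis_exists)
  have "finite B"
    using finite_subset[OF subset_trans[OF B(1) assms(2)] finite_vecs_on[OF assms(1)]] .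
  have "orth I W = orth I B"
    using orth_span[of I B] fv.span_subspace[OF B(1,3) assms(3)] by simp
  moreover have "fv.dim (dot_map I B ` vecs_on I) = card B"
    using dim_image_dot_map_independent[OF assms(1) subset_trans[OF B(1) assms(2)]
        \<open>finite B\<close> B(2)] .
  ultimately show ?thesis
    using dim_orth_plus_dim_image_dot_map[OF assms(1), of B] B(4) by simp
qed

lemma orth_orth:
  fixes W :: "('i \<Rightarrow> 'a::{field,finite}) set"
  assumes "finite I" "W \<subseteq> vecs_on I" "fv.subspace W"
  shows "orth I (orth I W) = W"
proof (rule sym, rule fv.subspace_eq_if_dim_eq[OF assms(3) subspace_orth])
  show "finite (orth I (orth I W))"
    using finite_subset[OF orth_subset_vecs_on finite_vecs_on[OF assms(1)]] .
  show "W \<subseteq> orth I (orth I W)"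
  proof
    fix w assume "w \<in> W"
    then show "w \<in> orth I (orth I W)"
      using assms(2) by (auto simp: orth_def dot_commute[of I w])
  qed
  show "fv.dim W = fv.dim (orth I (orth I W))"
    using dim_orth_plus_dim[OF assms]
      dim_orth_plus_dim[OF assms(1) orth_subset_vecs_on subspace_orth, of W] by simp
qed

lemma orth_image_adjoint:
  assumes "\<And>x y. dot I x (T y) = dot J (P x) y" "\<And>y. T y \<in> vecs_on I"
  shows "orth J (P ` D) = {y \<in> vecs_on J. T y \<in> orth I D}"
proof -
  have "dot J y (P x) = dot I (T y) x" for x y
    using assms(1)[of x y] dot_commute[of I x] dot_commute[of J y] by simp
  then show ?thesis using assms(2) unfolding orth_def by auto
qed

section \<open>Subfields, \<open>K\<close>-spans and \<open>K\<close>-dimensions\<close>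

lemma subfield_sum: "subfield K \<Longrightarrow> (\<And>x. x \<in> T \<Longrightarrow> f x \<in> K) \<Longrightarrow> sum f T \<in> K"
  by (induction T rule: infinite_finite_induct) (auto simp: subfield_def)

lemma subfield_mult: "subfield K \<Longrightarrow> x \<in> K \<Longrightarrow> y \<in> K \<Longrightarrow> x * y \<in> K"
  by (simp add: subfield_def)

lemma subfield_inverse: "subfield K \<Longrightarrow> x \<in> K \<Longrightarrow> inverse x \<in> K"
  by (simp add: subfield_def)

lemma kspan_superset: "subfield K \<Longrightarrow> S \<subseteq> kspan K S"
  unfolding kspan_def subfield_def
  by (auto intro!: exI[of _ "{u}" for u] exI[of _ "\<lambda>_. 1"])

lemma kspan_subset:
  assumes "ksubspace K V" "S \<subseteq> V"
  shows "kspan K S \<subseteq> V"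
proof
  fix v assume "v \<in> kspan K S"
  then obtain T a where
    T: "finite T" "T \<subseteq> S" "\<forall>u\<in>T. a u \<in> K" "v = (\<lambda>x. \<Sum>u\<in>T. a u * u x)"
    by (auto simp: kspan_def)
  have "(\<lambda>x. \<Sum>u\<in>T. a u * u x) \<in> V"
    using T(1-3)
  proof (induction T rule: finite_induct)
    case empty
    then show ?case using assms(1) by (simp add: ksubspace_def)
  next
    case (insert u F)
    then have "(\<lambda>x. a u * u x) \<in> V" "(\<lambda>x. \<Sum>u\<in>F. a u * u x) \<in> V"
      using assms by (auto simp: ksubspace_def)
    then show ?case using insert.hyps assms(1) by (simp add: ksubspace_def)
  qed
  with T(4) show "v \<in> V" by simp
qed

lemma kspan_eq_sum:
  "kspan K S = {\<Sum>u\<in>T. scale_fun (a u) u | T a. finite T \<and> T \<subseteq> S \<and> (\<forall>u\<in>T. a u \<in> K)}"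
  by (auto simp: kspan_def fun_eq_iff sum_fun_apply)

lemma kspan_subset_span: "kspan K S \<subseteq> fv.span S"
  unfolding kspan_eq_sum by clarify (intro fv.span_sum fv.span_scale fv.span_base, blast)

lemma kspan_UNIV: "kspan UNIV S = fv.span S"
  unfolding kspan_eq_sum fv.span_explicit by blast

lemma ksubspace_UNIV_iff: "ksubspace UNIV V \<longleftrightarrow> fv.subspace V"
  by (auto simp: ksubspace_def fv.subspace_def zero_fun_def plus_fun_def scale_fun_def)

lemma ksubspace_Int_subspace: "ksubspace K V \<Longrightarrow> fv.subspace W \<Longrightarrow> ksubspace K (V \<inter> W)"
  by (auto simp: ksubspace_def fv.subspace_def zero_fun_def plus_fun_def scale_fun_def)

lemma kdim_eqI:
  assumes "finite B" "B \<subseteq> V" "kspan K B = V" "card B = fv.dim V"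
  shows "kdim K V = fv.dim V"
  unfolding kdim_def
proof (rule Least_equality)
  show "\<exists>B. finite B \<and> card B = fv.dim V \<and> B \<subseteq> V \<and> kspan K B = V"
    using assms by blast
next
  fix d assume "\<exists>B. finite B \<and> card B = d \<and> B \<subseteq> V \<and> kspan K B = V"
  then obtain B' where "finite B'" "card B' = d" "kspan K B' = V" by blast
  then show "fv.dim V \<le> d" using kspan_subset_span[of K B'] fv.dim_le_card[of V B'] by auto
qed

lemma kdim_UNIV:
  fixes V :: "('i \<Rightarrow> 'a::field) set"
  assumes "fv.subspace V" "finite V"
  shows "kdim UNIV V = fv.dim V"
proof -
  obtain B where B: "B \<subseteq> V" "V \<subseteq> fv.span B" "card B = fv.dim V"
    by (rule fv.basis_exists)
  then have "kspan UNIV B = V" by (simp add: kspan_UNIV fv.span_subspace assms(1))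
  then show ?thesis using kdim_eqI B(1,3) finite_subset[OF B(1) assms(2)] by blast
qed

lemma coords_spec:
  assumes "field_basis K bs"
  shows "\<forall>t<length bs. coords K bs x t \<in> K" "\<forall>t\<ge>length bs. coords K bs x t = 0"
    "x = (\<Sum>t<length bs. coords K bs x t * bs ! t)"
proof -
  have "\<exists>!a. (\<forall>t<length bs. a t \<in> K) \<and> (\<forall>t\<ge>length bs. a t = 0)
      \<and> x = (\<Sum>t<length bs. a t * bs ! t)"
    using assms unfolding field_basis_def by blast
  from theI'[OF this] show "\<forall>t<length bs. coords K bs x t \<in> K"
    "\<forall>t\<ge>length bs. coords K bs x t = 0" "x = (\<Sum>t<length bs. coords K bs x t * bs ! t)"
    unfolding coords_def by blast+
qed

lemma coords_unique:
  assumes "field_basis K bs" "\<forall>t<length bs. a t \<in> K" "\<forall>t\<ge>length bs. a t = 0"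
    "x = (\<Sum>t<length bs. a t * bs ! t)"
  shows "coords K bs x = a"
  unfolding coords_def by (rule the1_equality) (use assms in \<open>auto simp: field_basis_def\<close>)

lemma coords_sum:
  assumes "subfield K" "field_basis K bs" "finite T" "\<forall>w\<in>T. c w \<in> K"
  shows "coords K bs (\<Sum>w\<in>T. c w * x w) = (\<lambda>t. \<Sum>w\<in>T. c w * coords K bs (x w) t)"
proof (rule coords_unique[OF assms(2)])
  show "\<forall>t<length bs. (\<Sum>w\<in>T. c w * coords K bs (x w) t) \<in> K"
    using coords_spec(1)[OF assms(2)] assms(4)
    by (auto intro!: subfield_sum[OF assms(1)] subfield_mult[OF assms(1)])
  show "\<forall>t\<ge>length bs. (\<Sum>w\<in>T. c w * coords K bs (x w) t) = 0"
    using coords_spec(2)[OF assms(2)] by simp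
  have "(\<Sum>w\<in>T. c w * x w)
      = (\<Sum>w\<in>T. c w * (\<Sum>t<length bs. coords K bs (x w) t * bs ! t))"
    using coords_spec(3)[OF assms(2)] by (intro sum.cong refl) metis
  also have "\<dots> = (\<Sum>t<length bs. (\<Sum>w\<in>T. c w * coords K bs (x w) t) * bs ! t)"
    by (simp add: sum_distrib_left sum_distrib_right mult.assoc sum.swap[of _ T])
  finally show "(\<Sum>w\<in>T. c w * x w)
      = (\<Sum>t<length bs. (\<Sum>w\<in>T. c w * coords K bs (x w) t) * bs ! t)" .
qed

text \<open>Apply to \<open>w = \<Sum>a\<in>T. r a \<cdot> a\<close> the \<open>K\<close>-linear coordinate functional
  \<open>coords K bs _ t\<^sub>0\<close>, where \<open>t\<^sub>0\<close> is a coordinate at which \<open>1\<close> does not vanish.\<close>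

lemma in_kspan_if_in_span:
  assumes K: "subfield K" "field_basis K bs"
    and B: "\<forall>b\<in>B. \<forall>j. b j \<in> K" and w: "\<forall>j. w j \<in> K" "w \<in> fv.span B"
  shows "w \<in> kspan K B"
proof -
  obtain T r where T: "finite T" "T \<subseteq> B" "w = (\<Sum>a\<in>T. scale_fun (r a) a)"
    using w(2) unfolding fv.span_explicit by blast
  have w_apply: "w j = (\<Sum>a\<in>T. a j * r a)" for j
    using T(3) by (simp add: sum_fun_apply mult.commute)
  obtain t0 where t0: "coords K bs 1 t0 \<noteq> 0" "t0 < length bs"
    using coords_spec[OF K(2), of 1] by (metis (no_types, lifting) linorder_not_le sum.neutral
        mult_zero_left one_neq_zero)
  let ?e = "coords K bs 1 t0"
  have e: "w j * ?e = (\<Sum>a\<in>T. a j * coords K bs (r a) t0)" for j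
  proof -
    have "\<forall>a\<in>T. a j \<in> K" using B T(2) by blast
    from coords_sum[OF K T(1) this]
    have "coords K bs (w j) t0 = (\<Sum>a\<in>T. a j * coords K bs (r a) t0)"
      unfolding w_apply by simp
    moreover have "coords K bs (w j * 1) = (\<lambda>t. w j * coords K bs 1 t)"
      using coords_sum[OF K, of "{()}" "\<lambda>_. w j" "\<lambda>_. 1"] w(1) by simp
    ultimately show ?thesis by simp
  qed
  define c where "c a = coords K bs (r a) t0 * inverse ?e" for a
  have "w j = (\<Sum>a\<in>T. c a * a j)" for j
  proof -
    have "w j = w j * ?e * inverse ?e" using t0(1) by simp
    also have "\<dots> = (\<Sum>a\<in>T. c a * a j)"
      unfolding e c_def by (simp add: sum_distrib_left mult_ac)
    finally show ?thesis .
  qed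
  then have "w = (\<Sum>a\<in>T. scale_fun (c a) a)"
    by (simp add: fun_eq_iff sum_fun_apply)
  moreover have "\<forall>a\<in>T. c a \<in> K"
    using coords_spec(1)[OF K(2)] t0(2) K(1)
    by (auto simp: c_def intro!: subfield_mult subfield_inverse)
  ultimately show ?thesis unfolding kspan_eq_sum using T(1,2) by blast
qed

lemma kvecs_subset_vecs_on: "kvecs K m \<subseteq> vecs_on {..<m}"
  by (auto simp: kvecs_def vecs_on_def)

lemma finite_kvecs_subset:
  "W \<subseteq> kvecs K m \<Longrightarrow> finite (W :: (nat \<Rightarrow> 'a::{field,finite}) set)"
  using finite_subset[OF _ finite_vecs_on[of "{..<m}"]] kvecs_subset_vecs_on by blast

lemma kdim_eq_dim:
  fixes W :: "(nat \<Rightarrow> 'a::{field,finite}) set"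
  assumes K: "subfield K" "field_basis K bs" and W: "ksubspace K W" "W \<subseteq> kvecs K m"
  shows "kdim K W = fv.dim W"
proof -
  obtain B where B: "B \<subseteq> W" "W \<subseteq> fv.span B" "card B = fv.dim W"
    by (rule fv.basis_exists)
  have "W \<subseteq> kspan K B"
  proof
    fix w assume w: "w \<in> W"
    have "\<forall>b\<in>B. \<forall>j. b j \<in> K" using B(1) W(2) by (auto simp: kvecs_def)
    moreover have "\<forall>j. w j \<in> K" using w W(2) by (auto simp: kvecs_def)
    ultimately show "w \<in> kspan K B" using in_kspan_if_in_span[OF K] B(2) w by blast
  qed
  then have "kspan K B = W" using kspan_subset[OF W(1) B(1)] by blast
  then show ?thesis
    using kdim_eqI B(1,3) finite_subset[OF B(1) finite_kvecs_subset[OF W(2)]] by blast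
qed

text \<open>\<open>v = \<Sum>\<^sub>t (bs ! t) \<cdot> row\<^sub>t\<close> for the rows \<open>row\<^sub>t\<close> of \<open>\<Gamma>(v)\<close>; conversely, for
  \<open>v = \<Sum>\<^sub>w r\<^sub>w \<cdot> w\<close> with \<open>K\<close>-valued \<open>w\<close>, each row is \<open>\<Sum>\<^sub>w (coords K bs r\<^sub>w t) \<cdot> w\<close>.\<close>

lemma rowspace_Gamma_subset_iff:
  fixes v :: "nat \<Rightarrow> 'a::field"
  assumes K: "subfield K" "field_basis K bs" and L: "ksubspace K L" "L \<subseteq> kvecs K m"
    and v: "\<forall>j\<ge>m. v j = 0"
  shows "rowspace_Gamma K bs m v \<subseteq> L \<longleftrightarrow> v \<in> fv.span L"
proof -
  define row where "row t = (\<lambda>j. if j < m then coords K bs (v j) t else 0)" for t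
  have rowspace: "rowspace_Gamma K bs m v = kspan K (row ` {..<length bs})"
    unfolding rowspace_Gamma_def row_def by (rule arg_cong[where f="kspan K"]) auto
  show ?thesis
  proof
    assume sub: "rowspace_Gamma K bs m v \<subseteq> L"
    have rows: "row t \<in> L" if "t < length bs" for t
    proof -
      have "row t \<in> kspan K (row ` {..<length bs})"
        using kspan_superset[OF K(1), of "row ` {..<length bs}"] that by auto
      then show ?thesis using sub unfolding rowspace by blast
    qed
    have "v j = (\<Sum>t<length bs. bs ! t * row t j)" for j
    proof (cases "j < m")
      case True
      have "v j = (\<Sum>t<length bs. coords K bs (v j) t * bs ! t)"
        by (rule coords_spec(3)[OF K(2)])
      also have "\<dots> = (\<Sum>t<length bs. bs ! t * row t j)"
        using True by (simp add: row_def mult.commute)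
      finally show ?thesis .
    qed (simp add: v row_def)
    then have "v = (\<Sum>t<length bs. scale_fun (bs ! t) (row t))"
      by (simp add: fun_eq_iff sum_fun_apply)
    also have "\<dots> \<in> fv.span L"
      using rows by (intro fv.span_sum fv.span_scale fv.span_base) auto
    finally show "v \<in> fv.span L" .
  next
    assume "v \<in> fv.span L"
    then obtain T r where T: "finite T" "T \<subseteq> L" "v = (\<Sum>w\<in>T. scale_fun (r w) w)"
      unfolding fv.span_explicit by blast
    have TK: "\<forall>w\<in>T. \<forall>j. w j \<in> K" and T0: "\<forall>w\<in>T. \<forall>j\<ge>m. w j = 0"
      using T(2) L(2) by (auto simp: kvecs_def)
    have "row t \<in> L" if "t < length bs" for t
    proof -
      have "row t = (\<Sum>w\<in>T. scale_fun (coords K bs (r w) t) w)"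
      proof
        fix j
        show "row t j = (\<Sum>w\<in>T. scale_fun (coords K bs (r w) t) w) j"
        proof (cases "j < m")
          case True
          have "v j = (\<Sum>w\<in>T. w j * r w)"
            using T(3) by (simp add: sum_fun_apply mult.commute)
          moreover have "\<forall>w\<in>T. w j \<in> K" using TK by blast
          note coords_sum[OF K T(1) this, of r]
          ultimately show ?thesis
            using True by (simp add: row_def sum_fun_apply mult.commute)
        next
          case False
          then show ?thesis using T0 by (simp add: row_def sum_fun_apply sum.neutral)
        qed
      qed
      also have "\<dots> \<in> kspan K L"
        unfolding kspan_eq_sum using T(1,2) coords_spec(1)[OF K(2)] that
        by (intro CollectI exI[of _ T] exI[of _ "\<lambda>w. coords K bs (r w) t"]) auto
      finally show ?thesis using kspan_subset[OF L(1) order_refl] by blast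
    qed
    then show "rowspace_Gamma K bs m v \<subseteq> L"
      unfolding rowspace by (intro kspan_subset[OF L(1)]) auto
  qed
qed

lemma genmat_spec:
  assumes "subfield K" "ksubspace K V" "finite V"
  shows "\<forall>r<kdim K V. genmat K V r \<in> V" "kspan K (genmat K V ` {..<kdim K V}) = V"
proof -
  have "kspan K V = V"
    using kspan_subset[OF assms(2) order_refl] kspan_superset[OF assms(1)] by blast
  then have "\<exists>d B. finite B \<and> card B = d \<and> B \<subseteq> V \<and> kspan K B = V" using assms(3) by blast
  then have "\<exists>B. finite B \<and> card B = kdim K V \<and> B \<subseteq> V \<and> kspan K B = V"
    unfolding kdim_def by (rule LeastI_ex)
  then obtain B where B: "finite B" "card B = kdim K V" "B \<subseteq> V" "kspan K B = V" by blast
  obtain h where "bij_betw h {..<kdim K V} B"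
    using ex_bij_betw_nat_finite[OF B(1)] B(2) by (auto simp: atLeast0LessThan)
  then have "(\<forall>r<kdim K V. h r \<in> V) \<and> kspan K (h ` {..<kdim K V}) = V"
    using B(3,4) by (auto simp: bij_betw_def)
  then have "(\<forall>r<kdim K V. genmat K V r \<in> V) \<and> kspan K (genmat K V ` {..<kdim K V}) = V"
    unfolding genmat_def
    by (rule someI[where P = "\<lambda>A. (\<forall>r<kdim K V. A r \<in> V) \<and> kspan K (A ` {..<kdim K V}) = V"])
  then show "\<forall>r<kdim K V. genmat K V r \<in> V" "kspan K (genmat K V ` {..<kdim K V}) = V"
    by blast+
qed

lemma genmat_basis:
  fixes V :: "(nat \<Rightarrow> 'a::{field,finite}) set"
  assumes K: "subfield K" "field_basis K bs" and V: "ksubspace K V" "V \<subseteq> kvecs K m"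
  defines "R \<equiv> genmat K V ` {..<kdim K V}"
  shows "inj_on (genmat K V) {..<kdim K V}" "fv.independent R" "fv.span R = fv.span V"
proof -
  note spec = genmat_spec[OF K(1) V(1) finite_kvecs_subset[OF V(2)], folded R_def]
  have dim: "kdim K V = fv.dim V" by (rule kdim_eq_dim[OF K V])
  have "R \<subseteq> V" using spec(1) by (auto simp: R_def)
  moreover have V_R: "V \<subseteq> fv.span R" using spec(2) kspan_subset_span[of K R] by simp
  ultimately show "fv.span R = fv.span V"
    using fv.span_eq fv.span_superset by (metis subset_trans)
  have "kdim K V \<le> card R" using fv.dim_le_card[OF V_R] dim by (simp add: R_def)
  moreover have "card R \<le> kdim K V" unfolding R_def using card_image_le by fastforce
  ultimately have card_R: "card R = kdim K V" by simp
  then show "inj_on (genmat K V) {..<kdim K V}"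
    unfolding R_def by (intro eq_card_imp_inj_on) auto
  show "fv.independent R"
  proof
    assume "fv.dependent R"
    then obtain a where a: "a \<in> R" "a \<in> fv.span (R - {a})" unfolding fv.dependent_def by blast
    then have "fv.span R = fv.span (R - {a})"
      using fv.span_redundant[OF a(2)] by (simp add: insert_absorb)
    then have "kdim K V \<le> card (R - {a})"
      using fv.dim_le_card[of V "R - {a}"] V_R dim by (simp add: R_def)
    moreover have "card (R - {a}) < card R"
      using a(1) by (intro card_Diff1_less) (auto simp: R_def)
    ultimately show False using card_R by simp
  qed
qed

section \<open>Block vectors and the projection \<open>\<Pi>\<^sub>L\<close>\<close>

definition block :: "(nat \<times> nat \<Rightarrow> 'a) \<Rightarrow> nat \<Rightarrow> nat \<Rightarrow> 'a" where
  "block c i = (\<lambda>j. c (i, j))"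

definition block_index :: "nat \<Rightarrow> (nat \<Rightarrow> nat) \<Rightarrow> (nat \<times> nat) set" where
  "block_index l n = Sigma {..<l} (\<lambda>i. {..<n i})"

lemma finite_block_index: "finite (block_index l n)"
  by (simp add: block_index_def)

lemma card_block_index: "card (block_index l n) = (\<Sum>i<l. n i)"
  by (simp add: block_index_def)

lemma Fvecs_eq_vecs_on: "Fvecs l n = vecs_on (block_index l n)"
  by (auto simp: Fvecs_def vecs_on_def block_index_def)

lemma linear_block: "Vector_Spaces.linear scale_fun scale_fun (\<lambda>c. block c i)"
  by (rule linear_scale_funI) (simp_all add: block_def fun_eq_iff)

lemma dot_block_index: "dot (block_index l n) x y = (\<Sum>i<l. \<Sum>j<n i. x (i, j) * y (i, j))"
  unfolding dot_def block_index_def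
  by (subst sum.Sigma) (simp_all add: split_def)

lemma finite_Fvecs_subset:
  "C \<subseteq> Fvecs l n \<Longrightarrow> finite (C :: (nat \<times> nat \<Rightarrow> 'a::{field,finite}) set)"
  using finite_subset[OF _ finite_vecs_on[OF finite_block_index]] by (simp add: Fvecs_eq_vecs_on)

lemma dual_code_eq_orth: "dual_code l n C = orth (block_index l n) C"
  by (auto simp: dual_code_def orth_def Fvecs_eq_vecs_on dot_block_index)

definition PiL_adj :: "nat \<Rightarrow> (nat \<Rightarrow> nat) \<Rightarrow> (nat \<Rightarrow> 'a::field set)
    \<Rightarrow> (nat \<Rightarrow> (nat \<Rightarrow> 'a) set) \<Rightarrow> (nat \<times> nat \<Rightarrow> 'a) \<Rightarrow> (nat \<times> nat \<Rightarrow> 'a)" where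
  "PiL_adj l n K L y = (\<lambda>(i, j). if i < l \<and> j < n i
       then (\<Sum>r<kdim (K i) (L i). y (i, r) * genmat (K i) (L i) r j) else 0)"

lemma linear_PiL: "Vector_Spaces.linear scale_fun scale_fun (PiL l n K L)"
  by (rule linear_scale_funI)
    (auto simp: PiL_def fun_eq_iff sum.distrib sum_distrib_left algebra_simps)

lemma linear_PiL_adj: "Vector_Spaces.linear scale_fun scale_fun (PiL_adj l n K L)"
  by (rule linear_scale_funI)
    (auto simp: PiL_adj_def fun_eq_iff sum.distrib sum_distrib_left algebra_simps)

lemma PiL_in_vecs_on: "PiL l n K L x \<in> vecs_on (block_index l (\<lambda>i. kdim (K i) (L i)))"
  by (auto simp: PiL_def vecs_on_def block_index_def)

lemma PiL_adj_in_Fvecs: "PiL_adj l n K L y \<in> Fvecs l n"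
  by (auto simp: PiL_adj_def Fvecs_def)

lemma dot_PiL_adj:
  "dot (block_index l n) x (PiL_adj l n K L y)
     = dot (block_index l (\<lambda>i. kdim (K i) (L i))) (PiL l n K L x) y"
proof -
  define d where "d i = kdim (K i) (L i)" for i
  define A where "A i = genmat (K i) (L i)" for i
  have "dot (block_index l n) x (PiL_adj l n K L y)
      = (\<Sum>i<l. \<Sum>j<n i. \<Sum>r<d i. x (i, j) * y (i, r) * A i r j)"
    by (simp add: dot_block_index PiL_adj_def sum_distrib_left mult.assoc d_def A_def)
  also have "\<dots> = (\<Sum>i<l. \<Sum>r<d i. \<Sum>j<n i. x (i, j) * y (i, r) * A i r j)"
    by (rule sum.cong[OF refl], rule sum.swap)
  also have "\<dots> = dot (block_index l d) (PiL l n K L x) y"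
    by (simp add: dot_block_index PiL_def sum_distrib_left mult_ac d_def A_def)
  finally show ?thesis by (simp add: d_def[abs_def])
qed

section \<open>The nullity of the sum-matroid\<close>

locale sum_rank_space =
  fixes l :: nat and n :: "nat \<Rightarrow> nat" and K :: "nat \<Rightarrow> 'a::{field,finite} set"
    and \<beta> :: "nat \<Rightarrow> 'a list"
  assumes subfield: "i < l \<Longrightarrow> subfield (K i)"
    and field_basis: "i < l \<Longrightarrow> field_basis (K i) (\<beta> i)"
begin

lemma PlatD:
  assumes "L \<in> Plat l n K" "i < l"
  shows "ksubspace (K i) (L i)" "L i \<subseteq> kvecs (K i) (n i)"
  using assms by (simp_all add: Plat_def)

lemma VL_eq:
  assumes "L \<in> Plat l n K"
  shows "VL l n K \<beta> L = {c \<in> Fvecs l n. \<forall>i<l. block c i \<in> fv.span (L i)}"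
proof -
  have "rowspace_Gamma (K i) (\<beta> i) (n i) (\<lambda>j. c (i, j)) \<subseteq> L i
      \<longleftrightarrow> block c i \<in> fv.span (L i)" if "c \<in> Fvecs l n" "i < l" for c i
    using rowspace_Gamma_subset_iff[OF subfield field_basis PlatD[OF assms]] that
    by (simp add: block_def Fvecs_def)
  then show ?thesis unfolding VL_def by auto
qed

lemma subspace_VL:
  assumes "L \<in> Plat l n K"
  shows "fv.subspace (VL l n K \<beta> L)"
proof -
  have "VL l n K \<beta> L
      = vecs_on (block_index l n) \<inter> (\<Inter>i<l. {c. block c i \<in> fv.span (L i)})"
    unfolding VL_eq[OF assms] Fvecs_eq_vecs_on by auto
  also have "fv.subspace \<dots>"
    using fv2.linear_subspace_vimage[OF linear_block fv.subspace_span]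
    by (intro fv.subspace_inter subspace_vecs_on fv.subspace_Int) (simp add: vimage_def)
  finally show ?thesis .
qed

lemma genmat_Plat:
  assumes "L \<in> Plat l n K" "i < l"
  shows "inj_on (genmat (K i) (L i)) {..<kdim (K i) (L i)}"
    "fv.independent (genmat (K i) (L i) ` {..<kdim (K i) (L i)})"
    "fv.span (genmat (K i) (L i) ` {..<kdim (K i) (L i)}) = fv.span (L i)"
    "r < kdim (K i) (L i) \<Longrightarrow> genmat (K i) (L i) r \<in> kvecs (K i) (n i)"
  using genmat_basis[OF subfield field_basis PlatD[OF assms]] assms(2)
    genmat_spec(1)[OF subfield PlatD(1)[OF assms] finite_kvecs_subset[OF PlatD(2)[OF assms]]]
    PlatD(2)[OF assms] by blast+

lemma block_PiL_adj:
  assumes "L \<in> Plat l n K" "i < l"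
  shows "block (PiL_adj l n K L y) i
    = (\<Sum>r<kdim (K i) (L i). scale_fun (y (i, r)) (genmat (K i) (L i) r))"
proof
  fix j
  have "genmat (K i) (L i) r j = 0" if "r < kdim (K i) (L i)" "n i \<le> j" for r
    using genmat_Plat(4)[OF assms that(1)] that(2) by (simp add: kvecs_def)
  then show "block (PiL_adj l n K L y) i j
      = (\<Sum>r<kdim (K i) (L i). scale_fun (y (i, r)) (genmat (K i) (L i) r)) j"
    using assms(2)
    by (auto simp: block_def PiL_adj_def sum_fun_apply intro!: sum.neutral[symmetric])
qed

lemma inj_on_PiL_adj:
  assumes "L \<in> Plat l n K"
  shows "inj_on (PiL_adj l n K L) (vecs_on (block_index l (\<lambda>i. kdim (K i) (L i))))"
  unfolding fv2.linear_inj_on_iff_eq_0[OF linear_PiL_adj subspace_vecs_on]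
proof clarify
  fix y assume y: "y \<in> vecs_on (block_index l (\<lambda>i. kdim (K i) (L i)))" "PiL_adj l n K L y = 0"
  show "y = 0"
  proof
    fix p :: "nat \<times> nat"
    obtain i r where p: "p = (i, r)" by (cases p)
    show "y p = 0 p"
    proof (cases "i < l \<and> r < kdim (K i) (L i)")
      case True
      have "(\<Sum>r<kdim (K i) (L i). scale_fun (y (i, r)) (genmat (K i) (L i) r)) = 0"
        using block_PiL_adj[OF assms, of i y] y(2) True by (simp add: block_def fun_eq_iff)
      from fv.sum_scale_eq_0_independent_image[OF genmat_Plat(2,1)[OF assms] _ this]
      show ?thesis using True p by simp
    qed (use y(1) p in \<open>auto simp: vecs_on_def block_index_def\<close>)
  qed
qed

lemma image_PiL_adj:
  assumes "L \<in> Plat l n K"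
  shows "PiL_adj l n K L ` vecs_on (block_index l (\<lambda>i. kdim (K i) (L i))) = VL l n K \<beta> L"
proof -
  have span_iff: "x \<in> fv.span (L i) \<longleftrightarrow>
      (\<exists>u. x = (\<Sum>r<kdim (K i) (L i). scale_fun (u r) (genmat (K i) (L i) r)))"
    if "i < l" for x i
    using fv.in_span_image_iff[OF genmat_Plat(1)[OF assms that] finite_lessThan]
      genmat_Plat(3)[OF assms that] by simp
  show ?thesis
  proof (intro equalityI subsetI)
    fix c assume "c \<in> PiL_adj l n K L ` vecs_on (block_index l (\<lambda>i. kdim (K i) (L i)))"
    then obtain y where c: "c = PiL_adj l n K L y" by blast
    have "block c i \<in> fv.span (L i)" if "i < l" for i
      unfolding span_iff[OF that] c block_PiL_adj[OF assms that]
      by (rule exI[of _ "\<lambda>r. y (i, r)"]) (rule refl)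
    then show "c \<in> VL l n K \<beta> L"
      unfolding VL_eq[OF assms] using PiL_adj_in_Fvecs c by blast
  next
    fix c assume "c \<in> VL l n K \<beta> L"
    then have c: "c \<in> Fvecs l n" "\<forall>i<l. block c i \<in> fv.span (L i)"
      by (simp_all add: VL_eq[OF assms])
    have "\<forall>i. \<exists>u. i < l \<longrightarrow>
        block c i = (\<Sum>r<kdim (K i) (L i). scale_fun (u r) (genmat (K i) (L i) r))"
      using span_iff[THEN iffD1] c(2) by blast
    from choice[OF this] obtain u where u: "\<forall>i. i < l \<longrightarrow>
        block c i = (\<Sum>r<kdim (K i) (L i). scale_fun (u i r) (genmat (K i) (L i) r))"
      by blast
    define y where "y = (\<lambda>(i, r). if i < l \<and> r < kdim (K i) (L i) then u i r else 0)"
    have "PiL_adj l n K L y = c"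
    proof
      fix p :: "nat \<times> nat"
      obtain i j where p: "p = (i, j)" by (cases p)
      show "PiL_adj l n K L y p = c p"
      proof (cases "i < l \<and> j < n i")
        case True
        have "c (i, j) = block c i j" by (simp add: block_def)
        also have "\<dots> = (\<Sum>r<kdim (K i) (L i). u i r * genmat (K i) (L i) r j)"
          using u True by (simp add: sum_fun_apply)
        also have "\<dots> = PiL_adj l n K L y (i, j)"
          using True by (auto simp: PiL_adj_def y_def intro!: sum.cong)
        finally show ?thesis using p by simp
      qed (use c(1) p in \<open>auto simp: PiL_adj_def Fvecs_def\<close>)
    qed
    moreover have "y \<in> vecs_on (block_index l (\<lambda>i. kdim (K i) (L i)))"
      by (auto simp: y_def vecs_on_def block_index_def)
    ultimately show "c \<in> PiL_adj l n K L ` vecs_on (block_index l (\<lambda>i. kdim (K i) (L i)))"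
      by blast
  qed
qed

lemma nullityC_eq_dim:
  assumes "L \<in> Plat l n K" "C \<subseteq> Fvecs l n" "fv.subspace C"
  shows "nullityC l n K C L = fv.dim (C \<inter> VL l n K \<beta> L)"
proof -
  define I where "I = block_index l n"
  define J where "J = block_index l (\<lambda>i. kdim (K i) (L i))"
  let ?P = "PiL l n K L" and ?T = "PiL_adj l n K L" and ?D = "orth I C"
  let ?Y = "{y \<in> vecs_on J. ?T y \<in> C}"
  have C: "C \<subseteq> vecs_on I" using assms(2) by (simp add: I_def Fvecs_eq_vecs_on)
  have PD: "fv.subspace (?P ` ?D)" "?P ` ?D \<subseteq> vecs_on J"
    using fv2.linear_subspace_image[OF linear_PiL subspace_orth] PiL_in_vecs_on
    by (auto simp: J_def)
  then have "finite (?P ` ?D)"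
    using finite_subset[OF _ finite_vecs_on[OF finite_block_index]] by (simp add: J_def)
  then have rho: "rhoC l n K C L = fv.dim (?P ` ?D)"
    unfolding rhoC_def dual_code_eq_orth I_def[symmetric] by (rule kdim_UNIV[OF PD(1)])
  have "orth J (?P ` ?D) = {y \<in> vecs_on J. ?T y \<in> orth I ?D}"
    by (rule orth_image_adjoint)
      (simp_all add: I_def J_def dot_PiL_adj PiL_adj_in_Fvecs[unfolded Fvecs_eq_vecs_on])
  also have "\<dots> = ?Y"
    using orth_orth[OF _ C assms(3)] by (simp add: I_def finite_block_index)
  finally have Y: "orth J (?P ` ?D) = ?Y" .
  have "fv.dim (?T ` ?Y) = fv.dim ?Y"
  proof (rule fv2.dim_image_eq_if_inj_on[OF finite_UNIV linear_PiL_adj])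
    show "fv.subspace ?Y" using subspace_orth Y by metis
    show "finite ?Y"
      by (rule finite_subset[of _ "vecs_on J"]) (auto simp: J_def finite_vecs_on finite_block_index)
    show "inj_on ?T ?Y"
      using inj_on_PiL_adj[OF assms(1)] by (auto simp: J_def intro: inj_on_subset)
  qed
  moreover have "?T ` ?Y = C \<inter> VL l n K \<beta> L"
    using image_PiL_adj[OF assms(1)] by (auto simp: J_def)
  moreover have "fv.dim (orth J (?P ` ?D)) + fv.dim (?P ` ?D) = Rk l K L"
    using dim_orth_plus_dim[OF _ PD(2,1)]
    by (simp add: J_def Rk_def card_block_index finite_block_index)
  ultimately show ?thesis
    unfolding nullityC_def rho Y by simp
qed

end

section \<open>Generalized weights\<close>

lemma Min_level_eq_Min_superlevel:
  fixes R g :: "'x \<Rightarrow> nat"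
  assumes fin: "finite (R ` P)" and ex: "\<exists>x\<in>P. i \<le> g x"
    and step: "\<And>x. x \<in> P \<Longrightarrow> i < g x \<Longrightarrow> \<exists>y\<in>P. R y < R x \<and> g x \<le> g y + 1"
  shows "Min {R x | x. x \<in> P \<and> g x = i} = Min {R x | x. x \<in> P \<and> i \<le> g x}"
proof -
  let ?E = "{R x | x. x \<in> P \<and> g x = i}" and ?S = "{R x | x. x \<in> P \<and> i \<le> g x}"
  have "?E \<subseteq> ?S" by auto
  have "finite ?S" by (rule finite_subset[OF _ fin]) blast
  moreover have "?S \<noteq> {}" using ex by blast
  ultimately have "Min ?S \<in> ?S" by (rule Min_in)
  then obtain x0 where x0: "x0 \<in> P" "i \<le> g x0" "R x0 = Min ?S" by auto
  have "g x0 = i"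
  proof (rule ccontr)
    assume "g x0 \<noteq> i"
    with x0(2) have "i < g x0" by simp
    then obtain y where y: "y \<in> P" "R y < R x0" "g x0 \<le> g y + 1" using step[OF x0(1)] by blast
    then have "R y \<in> ?S" using \<open>i < g x0\<close> by auto
    then have "Min ?S \<le> R y" by (rule Min_le[OF \<open>finite ?S\<close>])
    then show False using x0(3) y(2) by simp
  qed
  then have "Min ?S \<in> ?E" unfolding x0(3)[symmetric] using x0(1) by blast
  have "Min ?E \<le> Min ?S"
    using Min_le[OF finite_subset[OF \<open>?E \<subseteq> ?S\<close> \<open>finite ?S\<close>] \<open>Min ?S \<in> ?E\<close>] .
  moreover have "Min ?S \<le> Min ?E"
    using Min_antimono[OF \<open>?E \<subseteq> ?S\<close> _ \<open>finite ?S\<close>] \<open>Min ?S \<in> ?E\<close> by blast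
  ultimately show ?thesis by simp
qed

context sum_rank_space
begin

lemma Plat_drop_basis_vector:
  assumes L: "L \<in> Plat l n K" and j: "j < l" "0 < fv.dim (L j)"
  obtains L' b where "L' \<in> Plat l n K" "Rk l K L' + 1 = Rk l K L"
    "L j \<subseteq> fv.span (insert b (L' j))" "\<And>i. i \<noteq> j \<Longrightarrow> L' i = L i"
proof -
  note Lj = PlatD[OF L j(1)]
  obtain B where B: "B \<subseteq> L j" "fv.independent B" "L j \<subseteq> fv.span B" "card B = fv.dim (L j)"
    by (rule fv.basis_exists)
  have "finite B" using finite_subset[OF B(1) finite_kvecs_subset[OF Lj(2)]] .
  have "B \<noteq> {}" using B(4) j(2) by auto
  then obtain b where b: "b \<in> B" by blast
  define L' where "L' = L(j := L j \<inter> fv.span (B - {b}))"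
  have L'j: "ksubspace (K j) (L' j)" "L' j \<subseteq> kvecs (K j) (n j)"
    using ksubspace_Int_subspace[OF Lj(1) fv.subspace_span] Lj(2) by (auto simp: L'_def)
  have B'_L'j: "B - {b} \<subseteq> L' j" using B(1) by (auto simp: L'_def intro: fv.span_base)
  have "L' \<in> Plat l n K" using L L'j j(1) by (auto simp: Plat_def L'_def)
  moreover have "Rk l K L' + 1 = Rk l K L"
  proof -
    have "card (B - {b}) = fv.dim (L' j)"
      by (rule fv.basis_card_eq_dim[OF B'_L'j _ fv.independent_mono[OF B(2)]])
        (auto simp: L'_def)
    then have "kdim (K j) (L' j) + 1 = kdim (K j) (L j)"
      using kdim_eq_dim[OF subfield[OF j(1)] field_basis[OF j(1)] L'j]
        kdim_eq_dim[OF subfield[OF j(1)] field_basis[OF j(1)] Lj] B(4) b \<open>finite B\<close> j(2)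
      by (simp add: card_Diff_singleton card_gt_0_iff[symmetric])
    moreover have "Rk l K M = kdim (K j) (M j) + (\<Sum>i\<in>{..<l} - {j}. kdim (K i) (M i))" for M
      unfolding Rk_def using j(1) by (subst sum.remove[of _ j]) auto
    moreover have
      "(\<Sum>i\<in>{..<l} - {j}. kdim (K i) (L' i)) = (\<Sum>i\<in>{..<l} - {j}. kdim (K i) (L i))"
      by (rule sum.cong) (auto simp: L'_def)
    ultimately show ?thesis by simp
  qed
  moreover have "L j \<subseteq> fv.span (insert b (L' j))"
  proof -
    have "B \<subseteq> insert b (L' j)" using B'_L'j by blast
    then show ?thesis using B(3) fv.span_mono by blast
  qed
  ultimately show ?thesis by (rule that) (simp add: L'_def)
qed

lemma exists_smaller_Plat:
  assumes L: "L \<in> Plat l n K" and C: "C \<subseteq> Fvecs l n" "fv.subspace C"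
    and pos: "0 < fv.dim (C \<inter> VL l n K \<beta> L)"
  obtains L' where "L' \<in> Plat l n K" "Rk l K L' < Rk l K L"
    "fv.dim (C \<inter> VL l n K \<beta> L) \<le> fv.dim (C \<inter> VL l n K \<beta> L') + 1"
proof -
  let ?X = "C \<inter> VL l n K \<beta> L"
  have "finite C" using finite_Fvecs_subset[OF C(1)] .
  have "\<not> ?X \<subseteq> fv.span {}"
    using pos fv.dim_le_card[of ?X "{}"] by auto
  then obtain c where c: "c \<in> ?X" "c \<noteq> 0" by auto
  then obtain p where "c p \<noteq> 0" by (auto simp: fun_eq_iff)
  then obtain j t where jt: "c (j, t) \<noteq> 0" by (cases p) auto
  have c_VL: "c \<in> Fvecs l n" "\<forall>i<l. block c i \<in> fv.span (L i)"
    using c(1) by (simp_all add: VL_eq[OF L])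
  then have j: "j < l" using jt by (auto simp: Fvecs_def)
  have "0 < fv.dim (L j)"
  proof (rule ccontr)
    assume "\<not> 0 < fv.dim (L j)"
    then have "fv.span (L j) = {0}"
      using fv.span_eq_zero_if_dim_eq_0[OF finite_kvecs_subset[OF PlatD(2)[OF L j]]] by simp
    then have "block c j = 0" using c_VL(2) j by blast
    then show False using jt by (simp add: block_def fun_eq_iff)
  qed
  then obtain L' b where L': "L' \<in> Plat l n K" "Rk l K L' + 1 = Rk l K L"
      "L j \<subseteq> fv.span (insert b (L' j))" "\<And>i. i \<noteq> j \<Longrightarrow> L' i = L i"
    using Plat_drop_basis_vector[OF L j] by blast
  have "fv.span (L j) \<subseteq> fv.span (insert b (L' j))"
    using fv.span_minimal[OF L'(3) fv.subspace_span] .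
  then have "(\<lambda>x. block x j) ` ?X \<subseteq> fv.span (insert b (L' j))"
    using j by (auto simp: VL_eq[OF L])
  from fv2.dim_le_dim_preimage_span_plus_1[OF linear_block
      fv.subspace_inter[OF C(2) subspace_VL[OF L]] _ this]
  have "fv.dim ?X \<le> fv.dim {x \<in> ?X. block x j \<in> fv.span (L' j)} + 1"
    using \<open>finite C\<close> by simp
  also have "\<dots> \<le> fv.dim (C \<inter> VL l n K \<beta> L') + 1"
  proof -
    have "block x i \<in> fv.span (L' i)"
      if "x \<in> ?X" "block x j \<in> fv.span (L' j)" "i < l" for x i
      using that L'(4)[of i] by (cases "i = j") (auto simp: VL_eq[OF L])
    then have "{x \<in> ?X. block x j \<in> fv.span (L' j)} \<subseteq> C \<inter> VL l n K \<beta> L'"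
      by (auto simp: VL_eq[OF L'(1)] VL_eq[OF L])
    with fv.dim_le_if_subset[OF finite_UNIV fv.subspace_inter[OF C(2) subspace_VL[OF L'(1)]]]
    show ?thesis using \<open>finite C\<close> by simp
  qed
  finally show ?thesis using that L'(1,2) by simp
qed

lemma Rk_le:
  assumes "L \<in> Plat l n K"
  shows "Rk l K L \<le> (\<Sum>i<l. n i)"
  unfolding Rk_def
proof (rule sum_mono)
  fix i assume "i \<in> {..<l}"
  then have i: "i < l" by simp
  have "kdim (K i) (L i) = fv.dim (L i)"
    using kdim_eq_dim[OF subfield[OF i] field_basis[OF i] PlatD[OF assms i]] .
  also have "\<dots> \<le> fv.dim (vecs_on {..<n i} :: (nat \<Rightarrow> 'a) set)"
    using fv.dim_le_if_subset[OF finite_UNIV subspace_vecs_on finite_vecs_on[OF finite_lessThan]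
        subset_trans[OF PlatD(2)[OF assms i] kvecs_subset_vecs_on]] .
  finally show "kdim (K i) (L i) \<le> n i" by (simp add: dim_vecs_on)
qed

lemma finite_Rk_image: "finite (Rk l K ` Plat l n K)"
  by (rule finite_subset[of _ "{..(\<Sum>i<l. n i)}"]) (auto intro: Rk_le)

lemma exists_Plat_VL_eq_Fvecs:
  obtains T where "T \<in> Plat l n K" "VL l n K \<beta> T = Fvecs l n"
proof -
  define T where "T = (\<lambda>i. if i < l then kvecs (K i) (n i) else {\<lambda>_. 0})"
  have T: "T \<in> Plat l n K"
    using subfield by (auto simp: Plat_def T_def ksubspace_def kvecs_def subfield_def)
  have "block c i \<in> fv.span (kvecs (K i) (n i))" if "c \<in> Fvecs l n" "i < l" for c i
  proof -
    have "block c i = (\<Sum>j<n i. scale_fun (c (i, j)) (unit_vec j))"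
      using that by (auto simp: fun_eq_iff sum_unit_vec_apply block_def Fvecs_def)
    also have "\<dots> \<in> fv.span (kvecs (K i) (n i))"
      using subfield[OF that(2)]
      by (intro fv.span_sum fv.span_scale fv.span_base)
        (auto simp: kvecs_def unit_vec_def subfield_def)
    finally show ?thesis .
  qed
  then have "VL l n K \<beta> T = Fvecs l n" unfolding VL_eq[OF T] by (auto simp: T_def)
  with T show ?thesis by (rule that)
qed

lemma dS_eq_Min:
  assumes "C \<subseteq> Fvecs l n" "fv.subspace C"
  shows "dS l n K C i
    = Min {Rk l K L | L. L \<in> Plat l n K \<and> fv.dim (C \<inter> VL l n K \<beta> L) = i}"
proof -
  have "nullityC l n K C L = fv.dim (C \<inter> VL l n K \<beta> L)" if "L \<in> Plat l n K" for L
    using nullityC_eq_dim[OF that assms] .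
  then show ?thesis unfolding dS_def by (intro arg_cong[where f = Min]) auto
qed

lemma dSR_eq_Min:
  assumes "C \<subseteq> Fvecs l n" "fv.subspace C"
  shows "dSR l n K \<beta> C i
    = Min {Rk l K L | L. L \<in> Plat l n K \<and> i \<le> fv.dim (C \<inter> VL l n K \<beta> L)}"
proof -
  have "kdim UNIV (C \<inter> VL l n K \<beta> L) = fv.dim (C \<inter> VL l n K \<beta> L)"
    if "L \<in> Plat l n K" for L
    using kdim_UNIV[OF fv.subspace_inter[OF assms(2) subspace_VL[OF that]]]
      finite_Fvecs_subset[OF assms(1)] by simp
  then show ?thesis unfolding dSR_def by (intro arg_cong[where f = Min]) auto
qed

end

theorem mainTheorem8:
  fixes l :: nat and n :: "nat \<Rightarrow> nat" and K :: "nat \<Rightarrow> 'a::{field,finite} set"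
    and \<beta> :: "nat \<Rightarrow> 'a list" and C :: "(nat \<times> nat \<Rightarrow> 'a) set" and k i :: nat
  assumes "0 < l" and "\<forall>i<l. 0 < n i"
    and "\<forall>i<l. subfield (K i)"
    and "\<forall>i<l. field_basis (K i) (\<beta> i)"
    and "C \<subseteq> Fvecs l n" and "ksubspace (UNIV :: 'a set) C"
    and "kdim (UNIV :: 'a set) C = k"
    and "1 \<le> i" and "i \<le> k"
  shows "dS l n K C i = dSR l n K \<beta> C i"
proof -
  interpret sum_rank_space l n K \<beta> using assms(3,4) by unfold_locales auto
  have C: "fv.subspace C" using assms(6) by (simp add: ksubspace_UNIV_iff)
  have "fv.dim C = k" using assms(7) kdim_UNIV[OF C finite_Fvecs_subset[OF assms(5)]] by simp
  let ?g = "\<lambda>L. fv.dim (C \<inter> VL l n K \<beta> L)"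
  have "dS l n K C i = Min {Rk l K L | L. L \<in> Plat l n K \<and> ?g L = i}"
    by (rule dS_eq_Min[OF assms(5) C])
  also have "\<dots> = Min {Rk l K L | L. L \<in> Plat l n K \<and> i \<le> ?g L}"
  proof (rule Min_level_eq_Min_superlevel[OF finite_Rk_image])
    obtain T where T: "T \<in> Plat l n K" "VL l n K \<beta> T = Fvecs l n"
      by (rule exists_Plat_VL_eq_Fvecs)
    then show "\<exists>L\<in>Plat l n K. i \<le> ?g L"
      using assms(5,9) \<open>fv.dim C = k\<close> by (intro bexI[OF _ T(1)]) (simp add: Int_absorb2)
    show "\<exists>L'\<in>Plat l n K. Rk l K L' < Rk l K L \<and> ?g L \<le> ?g L' + 1"
      if "L \<in> Plat l n K" "i < ?g L" for L
    proof -
      have "0 < ?g L" using that(2) by simp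
      from exists_smaller_Plat[OF that(1) assms(5) C this] show ?thesis by blast
    qed
  qed
  also have "\<dots> = dSR l n K \<beta> C i"
    by (rule dSR_eq_Min[symmetric, OF assms(5) C])
  finally show ?thesis .
qed

end
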